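(* Let $E,E_0$ be real Banach spaces and $F,G:[a,b]\to E$ maps with $G$ continuous. Let $\Phi\subset\mathcal L(E,E_0)$ be a separating set for $E$, and assume that for each $\phi\in\Phi$ the composition $\phi\circ F:[a,b]\to E_0$ is of class $C^1$ with $(\phi\circ F)'(t)=\phi(G(t))$ for all $t\in[a,b]$. Then $F$ is of class $C^1$ and $F'(t)=G(t)$ for all $t\in[a,b]$.
   Context: $\mathcal L(E,E_0)$ denotes the bounded linear operators $E\to E_0$. A subset $\Phi\subset\mathcal L(E,E_0)$ is separating for $E$ if for every $x\in E\setminus\{0\}$ there is $\phi\in\Phi$ with $\phi(x)\neq0$. *)

theory Defs
  imports "HOL-Analysis.Analysis"
begin

definition C1_with_deriv :: "real set \<Rightarrow> (real \<Rightarrow> 'a::real_normed_vector) \<Rightarrow> (real \<Rightarrow> 'a) \<Rightarrow> bool" where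
  "C1_with_deriv S f f' \<longleftrightarrow>
     (\<forall>t\<in>S. (f has_vector_derivative f' t) (at t within S)) \<and> continuous_on S f'"

definition separating :: "('a::real_normed_vector \<Rightarrow>\<^sub>L 'b::real_normed_vector) set \<Rightarrow> bool" where
  "separating \<Phi> \<longleftrightarrow> (\<forall>x. x \<noteq> 0 \<longrightarrow> (\<exists>\<phi>\<in>\<Phi>. blinfun_apply \<phi> x \<noteq> 0))"

end

theory Submission
  imports Defs
begin

text \<open>Let H be the primitive of G with H a = F a. For every \<phi> \<in> \<Phi> the scalar maps \<phi> \<circ> F
  and \<phi> \<circ> H have the same derivative \<phi> \<circ> G on [a, b] and agree at a, so they coincide.
  Since \<Phi> separates points, F = H on [a, b], and H' = G by the fundamental theorem of calculus.\<close>

lemma separating_eqI: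
  assumes "separating \<Phi>"
    and "\<And>\<phi>. \<phi> \<in> \<Phi> \<Longrightarrow> blinfun_apply \<phi> x = blinfun_apply \<phi> y"
  shows "x = y"
proof (rule ccontr)
  assume "x \<noteq> y"
  with assms(1) obtain \<phi> where "\<phi> \<in> \<Phi>" "blinfun_apply \<phi> (x - y) \<noteq> 0"
    unfolding separating_def by (metis right_minus_eq)
  with assms(2) show False
    by (simp add: blinfun.diff_right)
qed

lemma antiderivative_unique_convex:
  fixes f g :: "real \<Rightarrow> 'a::real_normed_vector"
  assumes "convex S" and "x\<^sub>0 \<in> S" and "f x\<^sub>0 = g x\<^sub>0"
    and f': "\<And>x. x \<in> S \<Longrightarrow> (f has_vector_derivative h x) (at x within S)"
    and g': "\<And>x. x \<in> S \<Longrightarrow> (g has_vector_derivative h x) (at x within S)"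
    and "x \<in> S"
  shows "f x = g x"
proof -
  have "((\<lambda>x. f x - g x) has_vector_derivative 0) (at x within S)" if "x \<in> S" for x
    using has_vector_derivative_diff[OF f' g', OF that that] by simp
  then obtain c where "\<And>x. x \<in> S \<Longrightarrow> f x - g x = c"
    using has_vector_derivative_zero_constant[OF \<open>convex S\<close>] by blast
  with assms(2,3,6) show ?thesis
    by (metis eq_iff_diff_eq_0)
qed

theorem lemma2p3:
  fixes F G :: "real \<Rightarrow> 'e::banach"
    and \<Phi> :: "('e \<Rightarrow>\<^sub>L 'f::banach) set"
    and a b :: real
  assumes "continuous_on {a..b} G"
    and "separating \<Phi>"
    and "\<And>\<phi>. \<phi> \<in> \<Phi> \<Longrightarrow>
           C1_with_deriv {a..b} (\<lambda>t. blinfun_apply \<phi> (F t)) (\<lambda>t. blinfun_apply \<phi> (G t))"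
  shows "C1_with_deriv {a..b} F G"
proof -
  define H where "H u = F a + integral {a..u} G" for u
  have H': "(H has_vector_derivative G t) (at t within {a..b})" if "t \<in> {a..b}" for t
    unfolding H_def
    using has_vector_derivative_add[OF has_vector_derivative_const
        integral_has_vector_derivative[OF assms(1) that]] by simp
  have "F t = H t" if t: "t \<in> {a..b}" for t
  proof (rule separating_eqI[OF assms(2)])
    fix \<phi> assume "\<phi> \<in> \<Phi>"
    show "blinfun_apply \<phi> (F t) = blinfun_apply \<phi> (H t)"
    proof (rule antiderivative_unique_convex[where x\<^sub>0 = a])
      show "a \<in> {a..b}" using t by simp
      show "blinfun_apply \<phi> (F a) = blinfun_apply \<phi> (H a)" by (simp add: H_def)
      show "((\<lambda>t. blinfun_apply \<phi> (F t)) has_vector_derivative blinfun_apply \<phi> (G s))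
          (at s within {a..b})" if "s \<in> {a..b}" for s
        using assms(3)[OF \<open>\<phi> \<in> \<Phi>\<close>] that unfolding C1_with_deriv_def by blast
      show "((\<lambda>t. blinfun_apply \<phi> (H t)) has_vector_derivative blinfun_apply \<phi> (G s))
          (at s within {a..b})" if "s \<in> {a..b}" for s
        using bounded_linear.has_vector_derivative[OF blinfun.bounded_linear_right H'[OF that]] .
    qed (use t in auto)
  qed
  then have "(F has_vector_derivative G t) (at t within {a..b})" if "t \<in> {a..b}" for t
    using has_vector_derivative_transform[OF that _ H'[OF that]] that by blast
  with assms(1) show ?thesis
    unfolding C1_with_deriv_def by blast
qed

end
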